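(* Let $\Delta\in\mathcal{H}_{\ge3}$ be a hypergraph on $[d]$. There exists a unique point-line configuration $N$ on $[d]$ that is minimal, with respect to the dependency order, among all point-line configurations on $[d]$ in which every $3$-element subset of every edge of $\Delta$ is dependent.
   Context: A hypergraph on $[d]$ is a collection of subsets of $[d]$ (edges) none properly contained in another; $\mathcal{H}_{\ge3}$ is the set of hypergraphs all of whose edges have size at least $3$. A point-line configuration on $[d]$ is a simple matroid (no circuits of size $1$ or $2$) of rank at most $3$; its lines are the maximal subsets of size at least $3$ and rank $2$, and a $3$-subset is dependent iff it is contained in a line. Dependency order: $N_1\le N_2$ iff every dependent set of $N_1$ is dependent in $N_2$. *)

theory Defs
  imports Main
begin

definition matroid :: "'a set \<Rightarrow> 'a set set \<Rightarrow> bool" where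
  "matroid E \<I> \<longleftrightarrow> finite E \<and> \<I> \<subseteq> Pow E \<and> {} \<in> \<I> \<and>
     (\<forall>X Y. Y \<in> \<I> \<and> X \<subseteq> Y \<longrightarrow> X \<in> \<I>) \<and>
     (\<forall>X Y. X \<in> \<I> \<and> Y \<in> \<I> \<and> card X < card Y \<longrightarrow> (\<exists>y \<in> Y - X. insert y X \<in> \<I>))"

definition dependent :: "'a set \<Rightarrow> 'a set set \<Rightarrow> 'a set \<Rightarrow> bool" where
  "dependent E \<I> X \<longleftrightarrow> X \<subseteq> E \<and> X \<notin> \<I>"

text \<open>Simple: no circuits of size 1 or 2, i.e. every set of size at most 2 is independent.
  Rank at most 3: every independent set has at most 3 elements.\<close>
definition point_line_config :: "nat \<Rightarrow> nat set set \<Rightarrow> bool" where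
  "point_line_config d \<I> \<longleftrightarrow> matroid {1..d} \<I> \<and>
     (\<forall>X. X \<subseteq> {1..d} \<and> card X \<le> 2 \<longrightarrow> X \<in> \<I>) \<and>
     (\<forall>X \<in> \<I>. card X \<le> 3)"

definition dep_le :: "nat \<Rightarrow> nat set set \<Rightarrow> nat set set \<Rightarrow> bool" where
  "dep_le d N1 N2 \<longleftrightarrow> (\<forall>X. dependent {1..d} N1 X \<longrightarrow> dependent {1..d} N2 X)"

definition hypergraph :: "nat \<Rightarrow> nat set set \<Rightarrow> bool" where
  "hypergraph d \<Delta> \<longleftrightarrow> (\<forall>F \<in> \<Delta>. F \<subseteq> {1..d}) \<and>
     (\<forall>F \<in> \<Delta>. \<forall>G \<in> \<Delta>. \<not> F \<subset> G)"

definition hypergraph_ge3 :: "nat \<Rightarrow> nat set set \<Rightarrow> bool" where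
  "hypergraph_ge3 d \<Delta> \<longleftrightarrow> hypergraph d \<Delta> \<and> (\<forall>F \<in> \<Delta>. card F \<ge> 3)"

definition realizes_hypergraph :: "nat \<Rightarrow> nat set set \<Rightarrow> nat set set \<Rightarrow> bool" where
  "realizes_hypergraph d \<Delta> N \<longleftrightarrow>
     (\<forall>F \<in> \<Delta>. \<forall>S. S \<subseteq> F \<and> card S = 3 \<longrightarrow> dependent {1..d} N S)"

end

theory Submission
  imports Defs
begin

text \<open>A point-line configuration is determined by its dependent triples, and a family of
  triples arises in this way exactly when it is closed under the rule
  \<open>{a,b,c}, {a,b,e} dependent \<Longrightarrow> {a,c,e} dependent\<close>, which is the matroid exchange axiom
  specialised to rank 3. The dependency order becomes inclusion of triple families, and
  realizing the hypergraph means containing the triples inside its edges. Closed families are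
  stable under intersection, so the closure of these forced triples gives the least realizing
  configuration; a least element is the unique minimal one.\<close>

definition three_subsets :: "nat \<Rightarrow> nat set set" where
  "three_subsets d = {X. X \<subseteq> {1..d} \<and> card X = 3}"

definition dependent_triples :: "nat \<Rightarrow> nat set set \<Rightarrow> nat set set" where
  "dependent_triples d N = three_subsets d - N"

definition config_of_triples :: "nat \<Rightarrow> nat set set \<Rightarrow> nat set set" where
  "config_of_triples d T = {X. X \<subseteq> {1..d} \<and> (card X \<le> 2 \<or> (card X = 3 \<and> X \<notin> T))}"

definition triple_closed :: "nat set set \<Rightarrow> bool" where
  "triple_closed T \<longleftrightarrow>
     (\<forall>a b c e. distinct [a,b,c,e] \<and> {a,b,c} \<in> T \<and> {a,b,e} \<in> T \<longrightarrow> {a,c,e} \<in> T)"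

definition triple_closure :: "nat \<Rightarrow> nat set set \<Rightarrow> nat set set" where
  "triple_closure d A = three_subsets d \<inter> \<Inter>{T. triple_closed T \<and> A \<subseteq> T}"

definition forced_triples :: "nat set set \<Rightarrow> nat set set" where
  "forced_triples \<Delta> = {S. \<exists>F \<in> \<Delta>. S \<subseteq> F \<and> card S = 3}"

lemma triple_closedD:
  "triple_closed T \<Longrightarrow> distinct [a,b,c,e] \<Longrightarrow> {a,b,c} \<in> T \<Longrightarrow> {a,b,e} \<in> T \<Longrightarrow> {a,c,e} \<in> T"
  unfolding triple_closed_def by blast

lemma triple_closed_exchange:
  assumes closed: "triple_closed T" and "a \<noteq> b" and "distinct [p,q,r]" and "{p,q,r} \<notin> T"
  shows "\<exists>y \<in> {p,q,r} - {a,b}. {a,b,y} \<notin> T"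
proof (rule ccontr)
  assume all_in: "\<not> ?thesis"
  note C = triple_closedD[OF closed]
  consider "a \<notin> {p,q,r}" "b \<notin> {p,q,r}" | "a \<in> {p,q,r}" "b \<notin> {p,q,r}"
    | "a \<notin> {p,q,r}" "b \<in> {p,q,r}" | "a \<in> {p,q,r}" "b \<in> {p,q,r}" by blast
  then show False
  proof cases
    case 1
    then have "{a,b,p} \<in> T" "{a,b,q} \<in> T" "{a,b,r} \<in> T" using all_in by auto
    then have "{p,a,q} \<in> T" "{p,a,r} \<in> T"
      using C[of a b p q] C[of a b p r] 1 assms by (auto simp: insert_commute)
    then show False using C[of p a q r] 1 assms by auto
  next
    case 2
    then obtain u v where uv: "{p,q,r} = {a,u,v}" "distinct [a,u,v]" "b \<notin> {a,u,v}"
      using assms by (auto simp: insert_commute)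
    then have "{a,b,u} \<in> T" "{a,b,v} \<in> T" using all_in by auto
    then show False using C[of a b u v] uv assms by auto
  next
    case 3
    then obtain u v where uv: "{p,q,r} = {b,u,v}" "distinct [b,u,v]" "a \<notin> {b,u,v}"
      using assms by (auto simp: insert_commute)
    then have "{b,a,u} \<in> T" "{b,a,v} \<in> T" using all_in by (auto simp: insert_commute)
    then show False using C[of b a u v] uv assms by auto
  next
    case 4
    then obtain w where "{p,q,r} = {a,b,w}" "w \<notin> {a,b}" using assms by auto
    then show False using all_in assms by auto
  qed
qed

lemma point_line_config_of_triples:
  assumes closed: "triple_closed T"
  shows "point_line_config d (config_of_triples d T)"
proof -
  let ?N = "config_of_triples d T"
  have finite_mem: "finite X" if "X \<in> ?N" for X
    using that unfolding config_of_triples_def by (auto intro: finite_subset)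
  have downward: "X \<in> ?N" if Y: "Y \<in> ?N" and "X \<subseteq> Y" for X Y
  proof (cases "X = Y")
    case False
    then have "card X < card Y" using psubset_card_mono finite_mem[OF Y] \<open>X \<subseteq> Y\<close> by blast
    then show ?thesis using Y \<open>X \<subseteq> Y\<close> unfolding config_of_triples_def by auto
  qed (use Y in simp)
  have augment: "\<exists>y \<in> Y - X. insert y X \<in> ?N"
    if X: "X \<in> ?N" and Y: "Y \<in> ?N" and less: "card X < card Y" for X Y
  proof (cases "card X \<le> 1")
    case True
    obtain y where y: "y \<in> Y" "y \<notin> X"
      using less card_mono[OF finite_mem[OF X]] by (metis not_le subsetI)
    have "card (insert y X) \<le> 2" using True finite_mem[OF X] y by simp
    then have "insert y X \<in> ?N" using X Y y unfolding config_of_triples_def by auto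
    then show ?thesis using y by blast
  next
    case False
    then have "card X = 2" "card Y = 3" "Y \<notin> T"
      using less Y unfolding config_of_triples_def by auto
    then obtain a b p q r where ab: "X = {a,b}" "a \<noteq> b"
      and pqr: "Y = {p,q,r}" "distinct [p,q,r]"
      by (auto simp: card_2_iff card_3_iff)
    obtain y where y: "y \<in> {p,q,r} - {a,b}" "{a,b,y} \<notin> T"
      using triple_closed_exchange[OF closed ab(2) pqr(2)] \<open>Y \<notin> T\<close> pqr(1) by blast
    have "insert y X = {a,b,y}" "card {a,b,y} = 3" using ab y by auto
    then have "insert y X \<in> ?N"
      using X Y y pqr ab unfolding config_of_triples_def by auto
    then show ?thesis using y pqr ab by auto
  qed
  have "?N \<subseteq> Pow {1..d}" "{} \<in> ?N" "\<forall>X. X \<subseteq> {1..d} \<and> card X \<le> 2 \<longrightarrow> X \<in> ?N"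
    "\<forall>X \<in> ?N. card X \<le> 3"
    unfolding config_of_triples_def by auto
  moreover have "\<forall>X Y. Y \<in> ?N \<and> X \<subseteq> Y \<longrightarrow> X \<in> ?N" using downward by blast
  moreover have "\<forall>X Y. X \<in> ?N \<and> Y \<in> ?N \<and> card X < card Y \<longrightarrow> (\<exists>y \<in> Y - X. insert y X \<in> ?N)"
    using augment by blast
  ultimately show ?thesis unfolding point_line_config_def matroid_def by simp
qed

lemma dependent_triples_of_triples:
  assumes "T \<subseteq> three_subsets d"
  shows "dependent_triples d (config_of_triples d T) = T"
  using assms unfolding dependent_triples_def three_subsets_def config_of_triples_def by auto

lemma config_of_dependent_triples:
  assumes "point_line_config d N"
  shows "config_of_triples d (dependent_triples d N) = N"
proof -
  have "N \<subseteq> Pow {1..d}" "\<And>X. X \<subseteq> {1..d} \<Longrightarrow> card X \<le> 2 \<Longrightarrow> X \<in> N"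
    "\<And>X. X \<in> N \<Longrightarrow> card X \<le> 3"
    using assms unfolding point_line_config_def matroid_def by auto
  then show ?thesis
    unfolding config_of_triples_def dependent_triples_def three_subsets_def by (force simp: le_Suc_eq)
qed

lemma triple_closed_dependent_triples:
  assumes config: "point_line_config d N"
  shows "triple_closed (dependent_triples d N)"
  unfolding triple_closed_def
proof (intro allI impI)
  fix a b c e
  assume H: "distinct [a,b,c,e] \<and> {a,b,c} \<in> dependent_triples d N \<and> {a,b,e} \<in> dependent_triples d N"
  have matroid: "matroid {1..d} N"
    and small: "\<And>X. X \<subseteq> {1..d} \<Longrightarrow> card X \<le> 2 \<Longrightarrow> X \<in> N"
    using config unfolding point_line_config_def by auto
  have "{a,c,e} \<subseteq> {1..d}" "card {a,c,e} = 3" "{a,b} \<in> N"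
    using H small[of "{a,b}"] unfolding dependent_triples_def three_subsets_def by auto
  moreover have "{a,c,e} \<notin> N"
  proof
    assume "{a,c,e} \<in> N"
    moreover have "card {a,b} < card {a,c,e}" using H by auto
    ultimately obtain y where "y \<in> {a,c,e} - {a,b}" "insert y {a,b} \<in> N"
      using matroid \<open>{a,b} \<in> N\<close> unfolding matroid_def by meson
    moreover have "{a,b,c} \<notin> N" "{a,b,e} \<notin> N" using H unfolding dependent_triples_def three_subsets_def by auto
    ultimately show False by (auto simp: insert_commute)
  qed
  ultimately show "{a,c,e} \<in> dependent_triples d N" unfolding dependent_triples_def three_subsets_def by blast
qed

lemma dep_le_refl: "dep_le d N N"
  unfolding dep_le_def by blast

lemma dep_le_iff_dependent_triples:
  assumes "point_line_config d N1" "point_line_config d N2"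
  shows "dep_le d N1 N2 \<longleftrightarrow> dependent_triples d N1 \<subseteq> dependent_triples d N2"
proof
  assume "dep_le d N1 N2"
  then show "dependent_triples d N1 \<subseteq> dependent_triples d N2"
    unfolding dep_le_def dependent_def dependent_triples_def three_subsets_def by blast
next
  assume "dependent_triples d N1 \<subseteq> dependent_triples d N2"
  then have "X \<notin> config_of_triples d (dependent_triples d N2)"
    if "X \<subseteq> {1..d}" "X \<notin> config_of_triples d (dependent_triples d N1)" for X
    using that unfolding config_of_triples_def dependent_triples_def three_subsets_def by auto
  then show "dep_le d N1 N2"
    unfolding dep_le_def dependent_def using config_of_dependent_triples assms by metis
qed

lemma dep_le_antisym:
  assumes "point_line_config d N1" "point_line_config d N2" "dep_le d N1 N2" "dep_le d N2 N1"
  shows "N1 = N2"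
  using assms dep_le_iff_dependent_triples config_of_dependent_triples by (metis subset_antisym)

lemma triple_closed_Inter: "(\<And>T. T \<in> \<T> \<Longrightarrow> triple_closed T) \<Longrightarrow> triple_closed (\<Inter>\<T>)"
  unfolding triple_closed_def by blast

lemma triple_closed_Int: "triple_closed S \<Longrightarrow> triple_closed T \<Longrightarrow> triple_closed (S \<inter> T)"
  unfolding triple_closed_def by blast

lemma triple_closed_three_subsets: "triple_closed (three_subsets d)"
  unfolding triple_closed_def three_subsets_def by auto

lemma triple_closed_triple_closure: "triple_closed (triple_closure d A)"
  unfolding triple_closure_def
  by (intro triple_closed_Int triple_closed_three_subsets triple_closed_Inter) blast

lemma triple_closure_subset_three_subsets: "triple_closure d A \<subseteq> three_subsets d"
  unfolding triple_closure_def by blast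

lemma subset_triple_closure: "A \<subseteq> three_subsets d \<Longrightarrow> A \<subseteq> triple_closure d A"
  unfolding triple_closure_def by blast

lemma triple_closure_least: "triple_closed T \<Longrightarrow> A \<subseteq> T \<Longrightarrow> triple_closure d A \<subseteq> T"
  unfolding triple_closure_def by blast

lemma realizes_hypergraph_iff_forced_triples:
  assumes "\<forall>F \<in> \<Delta>. F \<subseteq> {1..d}"
  shows "realizes_hypergraph d \<Delta> N \<longleftrightarrow> forced_triples \<Delta> \<subseteq> dependent_triples d N"
  using assms unfolding realizes_hypergraph_def forced_triples_def dependent_def
    dependent_triples_def three_subsets_def by blast

lemma forced_triples_subset_three_subsets:
  "\<forall>F \<in> \<Delta>. F \<subseteq> {1..d} \<Longrightarrow> forced_triples \<Delta> \<subseteq> three_subsets d"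
  unfolding forced_triples_def three_subsets_def by blast

definition least_realization :: "nat \<Rightarrow> nat set set \<Rightarrow> nat set set" where
  "least_realization d \<Delta> = config_of_triples d (triple_closure d (forced_triples \<Delta>))"

lemma point_line_config_least_realization: "point_line_config d (least_realization d \<Delta>)"
  unfolding least_realization_def
  by (rule point_line_config_of_triples[OF triple_closed_triple_closure])

lemma realizes_hypergraph_iff_least_realization_le:
  assumes edges: "\<forall>F \<in> \<Delta>. F \<subseteq> {1..d}" and config: "point_line_config d N"
  shows "realizes_hypergraph d \<Delta> N \<longleftrightarrow> dep_le d (least_realization d \<Delta>) N"
proof -
  let ?A = "forced_triples \<Delta>"
  have "dep_le d (least_realization d \<Delta>) N \<longleftrightarrow> triple_closure d ?A \<subseteq> dependent_triples d N"
    using dep_le_iff_dependent_triples[OF point_line_config_least_realization config]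
    by (simp add: least_realization_def dependent_triples_of_triples
        triple_closure_subset_three_subsets)
  also have "\<dots> \<longleftrightarrow> ?A \<subseteq> dependent_triples d N"
    using triple_closure_least[OF triple_closed_dependent_triples[OF config]]
      subset_triple_closure[OF forced_triples_subset_three_subsets[OF edges]] by blast
  finally show ?thesis
    using realizes_hypergraph_iff_forced_triples[OF edges] by simp
qed

theorem mainTheorem4:
  fixes d :: nat and \<Delta> :: "nat set set"
  assumes "hypergraph_ge3 d \<Delta>"
  shows "\<exists>!N. point_line_config d N \<and> realizes_hypergraph d \<Delta> N \<and>
           (\<forall>N'. point_line_config d N' \<and> realizes_hypergraph d \<Delta> N' \<and> dep_le d N' N
                 \<longrightarrow> N' = N)"
proof -
  let ?N0 = "least_realization d \<Delta>"
  have edges: "\<forall>F \<in> \<Delta>. F \<subseteq> {1..d}"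
    using assms unfolding hypergraph_ge3_def hypergraph_def by blast
  note config0 = point_line_config_least_realization
  note least = realizes_hypergraph_iff_least_realization_le[OF edges]
  have realizes0: "realizes_hypergraph d \<Delta> ?N0"
    using least[OF config0] dep_le_refl by blast
  show ?thesis
  proof (rule ex1I[of _ ?N0], intro conjI allI impI)
    fix N' assume "point_line_config d N' \<and> realizes_hypergraph d \<Delta> N' \<and> dep_le d N' ?N0"
    then show "N' = ?N0" using least dep_le_antisym config0 by blast
  next
    fix N assume "point_line_config d N \<and> realizes_hypergraph d \<Delta> N \<and>
      (\<forall>N'. point_line_config d N' \<and> realizes_hypergraph d \<Delta> N' \<and> dep_le d N' N \<longrightarrow> N' = N)"
    then show "N = ?N0" using least config0 realizes0 by metis
  qed (use config0 realizes0 in auto)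
qed

end
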